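(* Let $\Phi$ be a commutative ring with unity $1\ne 0$ and $\Delta=\{\delta_1,\delta_2\}$. Let $S\subseteq\mathbb{N}$ be a recursively enumerable set and let $M$ be a two-tape acyclic Minsky machine with internal states $q_0,q_1,\ldots,q_n$ such that for every $x\in\mathbb{N}$, starting at the configuration $[1,2^{2^x},0]$, $M$ reaches $[0,1,0]$ in finitely many steps if $x\in S$ and operates infinitely if $x\notin S$. Let $A=\Phi\{x_1,x_2,q_0,q_1,\ldots,q_n\}$. For each command $q_i\varepsilon\sigma\to q_jT_\alpha T_\beta$ of $M$ put $$f(i,\varepsilon,\sigma)=x_1^{\varepsilon}x_2^{\sigma}\delta_1^{1-\varepsilon}\delta_2^{1-\sigma}(q_i)-x_1^{\varepsilon}x_2^{\sigma}\delta_1^{1-\varepsilon+\alpha}\delta_2^{1-\sigma+\beta}(q_j)\in A,$$ let $I$ be the differential ideal of $A$ generated by all $f(i,\varepsilon,\sigma)$, let $J$ be the differential ideal of $A$ generated by $\delta_1(x_2)$ and $\delta_2(x_1)$, and for $m\in\mathbb{N}$ put $f_m=x_1x_2\delta_1^{2^{2^m}}(q_1)-x_1x_2\delta_1(q_0)$. Then $f_m\in I+J$ if and only if $m\in S$.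
   Context: $\Phi$ is regarded as a differential ring with $\delta_1,\delta_2$ acting as zero. $\Phi\{y_1,\ldots,y_k\}$ denotes the differential polynomial ring: the polynomial ring over $\Phi$ in algebraically independent variables $\delta_1^a\delta_2^b(y_l)$ ($a,b\ge0$), with $\delta_1,\delta_2$ the commuting derivations determined by $\delta_1(\delta_1^a\delta_2^b(y_l))=\delta_1^{a+1}\delta_2^b(y_l)$, $\delta_2(\delta_1^a\delta_2^b(y_l))=\delta_1^a\delta_2^{b+1}(y_l)$. A differential ideal is an ideal closed under $\delta_1,\delta_2$. A two-tape Minsky machine has two tapes, infinite to the right, with cells numbered $0,1,2,\ldots$; cell $0$ of each tape contains $1$ and all other cells contain $0$. Its head has internal states $q_0,\ldots,q_n$, $q_0$ being terminal. A configuration is a triple $[i,a,b]$: state $q_i$, head observing cell $a$ of tape 1 and cell $b$ of tape 2. The program is a set of commands $q_i\varepsilon\sigma\to q_jT_\alpha T_\beta$ with $1\le i\le n$, $0\le j\le n$, $\varepsilon,\sigma\in\{0,1\}$, $\alpha,\beta\in\{-1,0,1\}$, $\alpha\ge0$ if $\varepsilon=1$, $\beta\ge0$ if $\sigma=1$, with at most one command for each triple $(i,\varepsilon,\sigma)$. Such a command applies to a configuration $[i,a,b]$ with $\varepsilon=1$ iff $a=0$ and $\sigma=1$ iff $b=0$, and produces the configuration $[j,a+\alpha,b+\beta]$ in one step; we write $[i,a,b]\to[j,a+\alpha,b+\beta]$. The machine is acyclic if there is no configuration from which it returns to that same configuration after a positive finite number of steps. (The symbols $q_0,\ldots,q_n$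 are used both as state names and as differential variables of $A$.) *)

theory Defs
  imports "HOL-Library.Poly_Mapping"
begin

text \<open>A differential variable is a triple (l, a, b) standing for
  delta1^a delta2^b (y_l).  Generator indices: y_0 = x_1, y_1 = x_2,
  y_(i+2) = q_i.\<close>

type_synonym dvar = "nat \<times> nat \<times> nat"
type_synonym 'a dpoly = "(dvar \<Rightarrow>\<^sub>0 nat) \<Rightarrow>\<^sub>0 'a"

definition dX :: "dvar \<Rightarrow> 'a::comm_ring_1 dpoly" where
  "dX v = Poly_Mapping.single (Poly_Mapping.single v 1) 1"

text \<open>The derivation extending a shift map on variables (Leibniz rule,
  written out on monomials).\<close>
definition dder :: "(dvar \<Rightarrow> dvar) \<Rightarrow> 'a::comm_ring_1 dpoly \<Rightarrow> 'a dpoly" where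
  "dder sh p = (\<Sum>m\<in>Poly_Mapping.keys p. \<Sum>v\<in>Poly_Mapping.keys (m :: dvar \<Rightarrow>\<^sub>0 nat).
      Poly_Mapping.single (m - Poly_Mapping.single v 1 + Poly_Mapping.single (sh v) 1)
        (Poly_Mapping.lookup p m * of_nat (Poly_Mapping.lookup m v)))"

definition delta1 :: "'a::comm_ring_1 dpoly \<Rightarrow> 'a dpoly" where
  "delta1 = dder (\<lambda>(l, a, b). (l, Suc a, b))"

definition delta2 :: "'a::comm_ring_1 dpoly \<Rightarrow> 'a dpoly" where
  "delta2 = dder (\<lambda>(l, a, b). (l, a, Suc b))"

definition dgen :: "nat \<Rightarrow> 'a::comm_ring_1 dpoly" where
  "dgen l = dX (l, 0, 0)"

definition dD :: "nat \<Rightarrow> nat \<Rightarrow> 'a::comm_ring_1 dpoly \<Rightarrow> 'a dpoly" where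
  "dD a b p = (delta1 ^^ a) ((delta2 ^^ b) p)"

definition ringA :: "nat \<Rightarrow> 'a::comm_ring_1 dpoly set" where
  "ringA n = {p. \<forall>m\<in>Poly_Mapping.keys p. \<forall>v\<in>Poly_Mapping.keys m. fst v \<le> n + 2}"

inductive_set diff_ideal :: "'a::comm_ring_1 dpoly set \<Rightarrow> 'a dpoly set \<Rightarrow> 'a dpoly set"
  for R G where
  gen: "g \<in> G \<Longrightarrow> g \<in> diff_ideal R G"
| zero: "0 \<in> diff_ideal R G"
| add: "x \<in> diff_ideal R G \<Longrightarrow> y \<in> diff_ideal R G \<Longrightarrow> x + y \<in> diff_ideal R G"
| mult: "r \<in> R \<Longrightarrow> x \<in> diff_ideal R G \<Longrightarrow> r * x \<in> diff_ideal R G"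
| d1: "x \<in> diff_ideal R G \<Longrightarrow> delta1 x \<in> diff_ideal R G"
| d2: "x \<in> diff_ideal R G \<Longrightarrow> delta2 x \<in> diff_ideal R G"

text \<open>A program with states q_0..q_n: prog i eps sigma = Some (j, alpha, beta)
  encodes the command q_i eps sigma -> q_j T_alpha T_beta (eps = True means 1).
  Being a function, there is at most one command per triple.\<close>
type_synonym minsky_prog = "nat \<Rightarrow> bool \<Rightarrow> bool \<Rightarrow> (nat \<times> int \<times> int) option"

definition minsky_program :: "nat \<Rightarrow> minsky_prog \<Rightarrow> bool" where
  "minsky_program n P \<longleftrightarrow>
    (\<forall>i e s j \<alpha> \<beta>. P i e s = Some (j, \<alpha>, \<beta>) \<longrightarrow>
       1 \<le> i \<and> i \<le> n \<and> j \<le> n \<and> \<alpha> \<in> {-1, 0, 1} \<and> \<beta> \<in> {-1, 0, 1} \<and>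
       (e \<longrightarrow> \<alpha> \<ge> 0) \<and> (s \<longrightarrow> \<beta> \<ge> 0))"

definition minsky_step :: "minsky_prog \<Rightarrow> ((nat \<times> nat \<times> nat) \<times> (nat \<times> nat \<times> nat)) set" where
  "minsky_step P = {((i, a, b), (j, a', b')). \<exists>\<alpha> \<beta>.
      P i (a = 0) (b = 0) = Some (j, \<alpha>, \<beta>) \<and> int a' = int a + \<alpha> \<and> int b' = int b + \<beta>}"

definition minsky_reaches :: "minsky_prog \<Rightarrow> nat \<times> nat \<times> nat \<Rightarrow> nat \<times> nat \<times> nat \<Rightarrow> bool" where
  "minsky_reaches P c c' \<longleftrightarrow> (c, c') \<in> (minsky_step P)\<^sup>*"

definition minsky_runs_forever :: "minsky_prog \<Rightarrow> nat \<times> nat \<times> nat \<Rightarrow> bool" where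
  "minsky_runs_forever P c \<longleftrightarrow>
    (\<exists>r :: nat \<Rightarrow> nat \<times> nat \<times> nat. r 0 = c \<and> (\<forall>k. (r k, r (Suc k)) \<in> minsky_step P))"

definition fcmd :: "nat \<Rightarrow> bool \<Rightarrow> bool \<Rightarrow> nat \<Rightarrow> int \<Rightarrow> int \<Rightarrow> 'a::comm_ring_1 dpoly" where
  "fcmd i e s j \<alpha> \<beta> =
     (let \<epsilon> = (of_bool e :: nat); \<sigma> = (of_bool s :: nat) in
       dgen 0 ^ \<epsilon> * dgen 1 ^ \<sigma> * dD (1 - \<epsilon>) (1 - \<sigma>) (dgen (i + 2))
     - dgen 0 ^ \<epsilon> * dgen 1 ^ \<sigma> * dD (nat (1 - int \<epsilon> + \<alpha>)) (nat (1 - int \<sigma> + \<beta>)) (dgen (j + 2)))"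

definition idealI :: "nat \<Rightarrow> minsky_prog \<Rightarrow> 'a::comm_ring_1 dpoly set" where
  "idealI n P = diff_ideal (ringA n)
     {fcmd i e s j \<alpha> \<beta> | i e s j \<alpha> \<beta>. P i e s = Some (j, \<alpha>, \<beta>)}"

definition idealJ :: "nat \<Rightarrow> 'a::comm_ring_1 dpoly set" where
  "idealJ n = diff_ideal (ringA n) {delta1 (dgen 1), delta2 (dgen 0)}"

definition fm :: "nat \<Rightarrow> 'a::comm_ring_1 dpoly" where
  "fm m = dgen 0 * dgen 1 * dD (2 ^ 2 ^ m) 0 (dgen (1 + 2))
        - dgen 0 * dgen 1 * dD 1 0 (dgen (0 + 2))"

end

theory Submission
  imports Defs "HOL-Library.Set_Algebras"
begin

text \<open>Write \<open>[i, a, b]\<close> also for the polynomial \<open>x\<^sub>1 x\<^sub>2 \<delta>\<^sub>1\<^sup>a \<delta>\<^sub>2\<^sup>b (q\<^sub>i)\<close>, so that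
  \<open>f\<^sub>m = [1, 2^2^m, 0] - [0, 1, 0]\<close>. Let \<open>[i, a, b] \<rightarrow> [j, a', b']\<close> by a command with
  generator \<open>f = x\<^sub>1^\<epsilon> x\<^sub>2^\<sigma> h\<close>. Modulo \<open>J\<close>, \<open>\<delta>\<^sub>2\<close> commutes with multiplication by \<open>x\<^sub>1\<close>
  and \<open>\<delta>\<^sub>1\<close> with multiplication by \<open>x\<^sub>2\<close>; since \<open>\<epsilon> = 1\<close> forces \<open>a = 0\<close> and \<open>\<sigma> = 1\<close>
  forces \<open>b = 0\<close>, this gives, modulo \<open>J\<close>,
  \<open>[i, a, b] - [j, a', b'] = x\<^sub>1^(1-\<epsilon>) x\<^sub>2^(1-\<sigma>) \<delta>\<^sub>1^(a-1) \<delta>\<^sub>2^(b-1) (f) \<in> I\<close>,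
  and a halting run telescopes to \<open>f\<^sub>m \<in> I + J\<close>.

  Conversely, for any function \<open>\<psi>\<close> on configurations that is constant along steps, the
  linear functional sending \<open>\<delta>\<^sub>1\<^sup>c(x\<^sub>1) \<delta>\<^sub>2\<^sup>d(x\<^sub>2) \<delta>\<^sub>1\<^sup>a \<delta>\<^sub>2\<^sup>b (q\<^sub>k)\<close> to
  \<open>(-1)^(c+d) \<psi>[k, a + c, b + d]\<close> and all other monomials to \<open>0\<close> vanishes on every
  derivative, on every multiple of a generator of \<open>I\<close> or \<open>J\<close>, hence on \<open>I + J\<close>; its value
  at \<open>f\<^sub>m\<close> is \<open>\<psi>[1, 2^2^m, 0] - \<psi>[0, 1, 0]\<close>. As the machine is deterministic and
  \<open>q\<^sub>0\<close> has no commands, the indicator of reaching \<open>[0, 1, 0]\<close> is such a \<open>\<psi>\<close>, which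
  gives the converse.\<close>

abbreviation mvar :: "dvar \<Rightarrow> (dvar \<Rightarrow>\<^sub>0 nat)" where
  "mvar v \<equiv> Poly_Mapping.single v 1"

lemma poly_mapping_single_induct [case_names zero single_add]:
  assumes "P 0" and "\<And>m c p. P p \<Longrightarrow> P (Poly_Mapping.single m c + p)"
  shows "P p"
proof (induction p rule: update_induct)
  case const
  then show ?case using assms(1) .
next
  case (update f a b)
  have "Poly_Mapping.update a b f = Poly_Mapping.single a b + f"
    using update(1)
    by (intro poly_mapping_eqI) (auto simp: lookup_update lookup_add lookup_single in_keys_iff)
  then show ?case using assms(2)[OF update(3)] by simp
qed

lemma additive_poly_mapping_eqI:
  fixes F G :: "('b \<Rightarrow>\<^sub>0 'c::comm_monoid_add) \<Rightarrow> 'd::comm_monoid_add"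
  assumes "F 0 = 0" "G 0 = 0"
    and "\<And>p q. F (p + q) = F p + F q" "\<And>p q. G (p + q) = G p + G q"
    and "\<And>m c. F (Poly_Mapping.single m c) = G (Poly_Mapping.single m c)"
  shows "F p = G p"
  by (induction p rule: poly_mapping_single_induct) (simp_all add: assms)

lemma keys_add_nat:
  "Poly_Mapping.keys (m + m' :: 'b \<Rightarrow>\<^sub>0 nat) = Poly_Mapping.keys m \<union> Poly_Mapping.keys m'"
  by (auto simp: in_keys_iff lookup_add)

definition lin_ext :: "('b \<Rightarrow> 'a) \<Rightarrow> ('b \<Rightarrow>\<^sub>0 'a) \<Rightarrow> 'a::comm_ring_1" where
  "lin_ext w p = (\<Sum>m\<in>Poly_Mapping.keys p. Poly_Mapping.lookup p m * w m)"

lemma lin_ext_0 [simp]: "lin_ext w 0 = 0"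
  by (simp add: lin_ext_def)

lemma lin_ext_single [simp]: "lin_ext w (Poly_Mapping.single m c) = c * w m"
  by (simp add: lin_ext_def)

lemma lin_ext_add: "lin_ext w (p + q) = lin_ext w p + lin_ext w q"
  unfolding lin_ext_def by (rule setsum_keys_plus_distrib) (simp_all add: distrib_right)

lemma lin_ext_uminus: "lin_ext w (- p) = - lin_ext w p"
  using lin_ext_add[of w p "- p"] by (simp add: eq_neg_iff_add_eq_0 add.commute)

lemma lin_ext_diff: "lin_ext w (p - q) = lin_ext w p - lin_ext w q"
  using lin_ext_add[of w p "- q"] by (simp add: lin_ext_uminus)

lemma lin_ext_sum: "lin_ext w (\<Sum>i\<in>K. f i) = (\<Sum>i\<in>K. lin_ext w (f i))"
  by (induction K rule: infinite_finite_induct) (simp_all add: lin_ext_add)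

lemma lin_ext_zero_fun [simp]: "lin_ext (\<lambda>_. 0) p = 0"
  by (simp add: lin_ext_def)

lemma lin_ext_mult_single:
  fixes r :: "'b::comm_monoid_add \<Rightarrow>\<^sub>0 'a::comm_ring_1"
  shows "lin_ext w (r * Poly_Mapping.single M c) = c * lin_ext (\<lambda>m. w (m + M)) r"
  by (rule additive_poly_mapping_eqI[where F = "\<lambda>r. lin_ext w (r * Poly_Mapping.single M c)"])
     (simp_all add: distrib_left distrib_right lin_ext_add mult_single mult_ac)

section \<open>Derivations on differential polynomials\<close>

definition dder_monom :: "(dvar \<Rightarrow> dvar) \<Rightarrow> (dvar \<Rightarrow>\<^sub>0 nat) \<Rightarrow> 'a::comm_ring_1 \<Rightarrow> 'a dpoly" where
  "dder_monom sh m c = (\<Sum>v\<in>Poly_Mapping.keys m.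
      Poly_Mapping.single (m - mvar v + mvar (sh v)) (c * of_nat (Poly_Mapping.lookup m v)))"

lemma dder_monom_superset:
  assumes "finite K" "Poly_Mapping.keys m \<subseteq> K"
  shows "dder_monom sh m c = (\<Sum>v\<in>K.
      Poly_Mapping.single (m - mvar v + mvar (sh v)) (c * of_nat (Poly_Mapping.lookup m v)))"
  unfolding dder_monom_def using assms
  by (intro sum.mono_neutral_left) (auto simp: in_keys_iff)

lemma dder_eq_sum_monom:
  "dder sh p = (\<Sum>m\<in>Poly_Mapping.keys p. dder_monom sh m (Poly_Mapping.lookup p m))"
  unfolding dder_def dder_monom_def by simp

lemma dder_single: "dder sh (Poly_Mapping.single m c) = dder_monom sh m c"
  unfolding dder_eq_sum_monom by (simp add: dder_monom_def)

lemma dder_0 [simp]: "dder sh 0 = 0"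
  unfolding dder_eq_sum_monom by simp

lemma dder_add: "dder sh (p + q) = dder sh p + dder sh q"
  unfolding dder_eq_sum_monom
  by (rule setsum_keys_plus_distrib)
     (simp_all add: dder_monom_def sum.distrib[symmetric] single_add distrib_right)

lemma dder_diff: "dder sh (p - q) = dder sh p - dder sh q"
proof -
  have "dder sh (- q) = - dder sh q"
    using dder_add[of sh q "- q"] by (simp add: eq_neg_iff_add_eq_0 add.commute)
  then show ?thesis using dder_add[of sh p "- q"] by simp
qed

lemma mvar_diff_add_commute:
  assumes "Poly_Mapping.lookup m v \<ge> 1"
  shows "(m + m') - mvar v + u = (m - mvar v + u) + m'"
  using assms
  by (intro poly_mapping_eqI) (auto simp: lookup_add lookup_minus lookup_single when_def)

lemma dder_mult_single:
  "dder sh (Poly_Mapping.single m1 c1 * Poly_Mapping.single m2 c2 :: 'a::comm_ring_1 dpoly)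
   = dder sh (Poly_Mapping.single m1 c1) * Poly_Mapping.single m2 c2
     + Poly_Mapping.single m1 c1 * dder sh (Poly_Mapping.single m2 c2)"
proof -
  define K where "K = Poly_Mapping.keys m1 \<union> Poly_Mapping.keys m2"
  have K: "finite K" "Poly_Mapping.keys (m1 + m2) \<subseteq> K"
    "Poly_Mapping.keys m1 \<subseteq> K" "Poly_Mapping.keys m2 \<subseteq> K"
    by (auto simp: K_def keys_add_nat)
  have term_eq: "Poly_Mapping.single (m1 + m2 - mvar v + mvar (sh v))
        (c1 * c2 * of_nat (Poly_Mapping.lookup (m1 + m2) v))
      = Poly_Mapping.single (m1 - mvar v + mvar (sh v) + m2)
          (c1 * of_nat (Poly_Mapping.lookup m1 v) * c2)
        + Poly_Mapping.single (m1 + (m2 - mvar v + mvar (sh v)))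
          (c1 * (c2 * of_nat (Poly_Mapping.lookup m2 v)))" for v
  proof -
    have swap1: "m1 + m2 - mvar v + mvar (sh v) = m1 - mvar v + mvar (sh v) + m2"
      if "Poly_Mapping.lookup m1 v \<ge> 1"
      using mvar_diff_add_commute[OF that] by simp
    have swap2: "m1 + m2 - mvar v + mvar (sh v) = m1 + (m2 - mvar v + mvar (sh v))"
      if "Poly_Mapping.lookup m2 v \<ge> 1"
      using mvar_diff_add_commute[OF that, of m1] by (simp add: add.commute add.left_commute)
    show ?thesis
      using swap1 swap2
      by (cases "Poly_Mapping.lookup m1 v = 0"; cases "Poly_Mapping.lookup m2 v = 0")
         (simp_all add: lookup_add single_add[symmetric] algebra_simps)
  qed
  have "dder sh (Poly_Mapping.single m1 c1 * Poly_Mapping.single m2 c2 :: 'a dpoly)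
      = dder_monom sh (m1 + m2) (c1 * c2)"
    by (simp add: mult_single dder_single)
  also have "\<dots> = (\<Sum>v\<in>K. Poly_Mapping.single (m1 - mvar v + mvar (sh v)) 
        (c1 * of_nat (Poly_Mapping.lookup m1 v))) * Poly_Mapping.single m2 c2
     + Poly_Mapping.single m1 c1 * (\<Sum>v\<in>K. Poly_Mapping.single (m2 - mvar v + mvar (sh v))
        (c2 * of_nat (Poly_Mapping.lookup m2 v)))"
    unfolding dder_monom_superset[OF K(1,2)] term_eq sum.distrib
    by (simp add: sum_distrib_left sum_distrib_right mult_single)
  also have "\<dots> = dder sh (Poly_Mapping.single m1 c1) * Poly_Mapping.single m2 c2
     + Poly_Mapping.single m1 c1 * dder sh (Poly_Mapping.single m2 c2)"
    by (simp add: dder_single dder_monom_superset[OF K(1,3)] dder_monom_superset[OF K(1,4)])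
  finally show ?thesis .
qed

lemma dder_mult: "dder sh (p * q :: 'a::comm_ring_1 dpoly) = dder sh p * q + p * dder sh q"
proof -
  have single_mult: "dder sh (Poly_Mapping.single m c * q :: 'a dpoly)
     = dder sh (Poly_Mapping.single m c) * q + Poly_Mapping.single m c * dder sh q" for m c
    by (rule additive_poly_mapping_eqI[where F = "\<lambda>q. dder sh (Poly_Mapping.single m c * q)"])
       (simp_all add: dder_add distrib_left distrib_right dder_mult_single)
  show ?thesis
    by (rule additive_poly_mapping_eqI[where F = "\<lambda>p. dder sh (p * q)"])
       (simp_all add: dder_add distrib_left distrib_right single_mult)
qed

lemma lin_ext_dder:
  "lin_ext w (dder sh p) = lin_ext (\<lambda>m. \<Sum>v\<in>Poly_Mapping.keys m.
      of_nat (Poly_Mapping.lookup m v) * w (m - mvar v + mvar (sh v))) p"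
  by (rule additive_poly_mapping_eqI[where F = "\<lambda>p. lin_ext w (dder sh p)"])
     (simp_all add: dder_add lin_ext_add dder_single dder_monom_def lin_ext_sum
       sum_distrib_left mult_ac)

lemma dder_dX: "dder sh (dX v :: 'a::comm_ring_1 dpoly) = dX (sh v)"
  unfolding dX_def dder_single dder_monom_def by simp

lemma funpow_delta1_dX: "(delta1 ^^ k) (dX (l, a, b) :: 'a::comm_ring_1 dpoly) = dX (l, a + k, b)"
  by (induction k) (simp_all add: delta1_def dder_dX)

lemma funpow_delta2_dX: "(delta2 ^^ k) (dX (l, a, b) :: 'a::comm_ring_1 dpoly) = dX (l, a, b + k)"
  by (induction k) (simp_all add: delta2_def dder_dX)

lemma dD_dX: "dD a b (dX (l, p, q) :: 'a::comm_ring_1 dpoly) = dX (l, p + a, q + b)"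
  unfolding dD_def by (simp add: funpow_delta1_dX funpow_delta2_dX)

lemma dD_dgen: "dD a b (dgen l :: 'a::comm_ring_1 dpoly) = dX (l, a, b)"
  unfolding dgen_def by (simp add: dD_dX)

lemma funpow_dder_diff:
  "(dder sh ^^ k) (p - q :: 'a::comm_ring_1 dpoly) = (dder sh ^^ k) p - (dder sh ^^ k) q"
  by (induction k) (simp_all add: dder_diff)

lemma dD_diff: "dD a b (p - q :: 'a::comm_ring_1 dpoly) = dD a b p - dD a b q"
  unfolding dD_def delta1_def delta2_def by (simp add: funpow_dder_diff)

lemma ringA_1 [simp]: "1 \<in> ringA n"
  unfolding ringA_def by simp

lemma ringA_dX: "fst v \<le> n + 2 \<Longrightarrow> dX v \<in> ringA n"
  unfolding ringA_def dX_def by simp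

lemma ringA_dgen: "l \<le> n + 2 \<Longrightarrow> dgen l \<in> ringA n"
  unfolding dgen_def by (simp add: ringA_dX)

lemma ringA_add: "p \<in> ringA n \<Longrightarrow> q \<in> ringA n \<Longrightarrow> p + q \<in> ringA n"
  unfolding ringA_def by (fastforce dest: subsetD[OF keys_add])

lemma ringA_uminus: "p \<in> ringA n \<Longrightarrow> - p \<in> ringA n"
  unfolding ringA_def by simp

lemma ringA_diff: "p \<in> ringA n \<Longrightarrow> q \<in> ringA n \<Longrightarrow> p - q \<in> ringA n"
  unfolding diff_conv_add_uminus by (intro ringA_add ringA_uminus)

lemma ringA_mult: "p \<in> ringA n \<Longrightarrow> q \<in> ringA n \<Longrightarrow> p * q \<in> ringA n"
  unfolding ringA_def by (fastforce dest!: subsetD[OF keys_mult] simp: keys_add_nat)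

lemma ringA_power: "p \<in> ringA n \<Longrightarrow> p ^ k \<in> ringA n"
  by (induction k) (simp_all add: ringA_mult)

lemma diff_ideal_diff:
  assumes "- 1 \<in> R" "x \<in> diff_ideal R G" "y \<in> diff_ideal R G"
  shows "x - y \<in> diff_ideal R G"
  using diff_ideal.add[OF assms(2) diff_ideal.mult[OF assms(1,3)]] by simp

lemma diff_ideal_funpow:
  assumes "d = delta1 \<or> d = delta2" "x \<in> diff_ideal R G"
  shows "(d ^^ k) x \<in> diff_ideal R G"
  using assms by (induction k) (auto intro: diff_ideal.d1 diff_ideal.d2)

lemma diff_ideal_dD: "x \<in> diff_ideal R G \<Longrightarrow> dD a b x \<in> diff_ideal R G"
  unfolding dD_def by (intro diff_ideal_funpow) simp_all

lemma diff_ideal_Un_subset: "diff_ideal R (G \<union> H) \<subseteq> diff_ideal R G + diff_ideal R H"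
proof
  fix x assume "x \<in> diff_ideal R (G \<union> H)"
  then show "x \<in> diff_ideal R G + diff_ideal R H"
  proof induction
    case (gen g)
    then consider "g \<in> G" | "g \<in> H" by blast
    then show ?case
    proof cases
      case 1
      then have "g + 0 \<in> diff_ideal R G + diff_ideal R H"
        by (intro set_plus_intro diff_ideal.gen diff_ideal.zero)
      then show ?thesis by simp
    next
      case 2
      then have "0 + g \<in> diff_ideal R G + diff_ideal R H"
        by (intro set_plus_intro diff_ideal.gen diff_ideal.zero)
      then show ?thesis by simp
    qed
  next
    case zero
    have "0 + 0 \<in> diff_ideal R G + diff_ideal R H"
      by (intro set_plus_intro diff_ideal.zero)
    then show ?case by simp
  next
    case (add x y)
    from add.IH obtain a b c e where "x = a + b" "y = c + e"
      and "a \<in> diff_ideal R G" "c \<in> diff_ideal R G" "b \<in> diff_ideal R H" "e \<in> diff_ideal R H"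
      by (auto elim!: set_plus_elim)
    moreover have "(a + c) + (b + e) \<in> diff_ideal R G + diff_ideal R H"
      using calculation by (intro set_plus_intro diff_ideal.add)
    ultimately show ?case by (simp add: add_ac)
  next
    case (mult r x)
    from mult.IH obtain a b where "x = a + b" "a \<in> diff_ideal R G" "b \<in> diff_ideal R H"
      by (auto elim!: set_plus_elim)
    with mult.hyps show ?case by (auto simp: distrib_left intro: diff_ideal.mult)
  next
    case (d1 x)
    from d1.IH obtain a b where "x = a + b" "a \<in> diff_ideal R G" "b \<in> diff_ideal R H"
      by (auto elim!: set_plus_elim)
    then show ?case by (auto simp: delta1_def dder_add intro: diff_ideal.d1[unfolded delta1_def])
  next
    case (d2 x)
    from d2.IH obtain a b where "x = a + b" "a \<in> diff_ideal R G" "b \<in> diff_ideal R H"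
      by (auto elim!: set_plus_elim)
    then show ?case by (auto simp: delta2_def dder_add intro: diff_ideal.d2[unfolded delta2_def])
  qed
qed

lemma diff_ideal_funpow_mult_commute:
  assumes d: "d = delta1 \<or> d = delta2"
    and dg: "d g \<in> diff_ideal R G" and h: "\<And>k. (d ^^ k) h \<in> R"
  shows "(d ^^ k) (g * h) - g * (d ^^ k) h \<in> diff_ideal R G"
proof (induction k)
  case 0
  show ?case by (simp add: diff_ideal.zero)
next
  case (Suc k)
  define D H where "D = (d ^^ k) (g * h)" and "H = (d ^^ k) h"
  have leibniz: "d (p * q) = d p * q + p * d q" and diff: "d (p - q) = d p - d q" for p q
    using d by (auto simp: delta1_def delta2_def dder_mult dder_diff)
  have "d (D - g * H) + H * d g \<in> diff_ideal R G"
    using Suc d h[of k] dg unfolding D_def H_def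
    by (auto intro: diff_ideal.add diff_ideal.mult diff_ideal.d1 diff_ideal.d2)
  moreover have "d (D - g * H) + H * d g = d D - g * d H"
    by (simp add: diff leibniz algebra_simps)
  ultimately show ?case by (simp add: D_def H_def)
qed

section \<open>Steps of the machine as elements of \<open>I + J\<close>\<close>

definition minsky_gens :: "minsky_prog \<Rightarrow> 'a::comm_ring_1 dpoly set" where
  "minsky_gens P = {fcmd i e s j \<alpha> \<beta> | i e s j \<alpha> \<beta>. P i e s = Some (j, \<alpha>, \<beta>)}"

definition config_poly :: "nat \<times> nat \<times> nat \<Rightarrow> 'a::comm_ring_1 dpoly" where
  "config_poly c = (case c of (i, a, b) \<Rightarrow> dgen 0 * dgen 1 * dX (i + 2, a, b))"

definition idealIJ :: "nat \<Rightarrow> minsky_prog \<Rightarrow> 'a::comm_ring_1 dpoly set" where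
  "idealIJ n P = diff_ideal (ringA n) (minsky_gens P \<union> {delta1 (dgen 1), delta2 (dgen 0)})"

lemma idealIJ_subset: "idealIJ n P \<subseteq> idealI n P + idealJ n"
  unfolding idealIJ_def idealI_def idealJ_def minsky_gens_def by (rule diff_ideal_Un_subset)

lemma fm_eq_config_poly: "fm m = config_poly (1, 2 ^ 2 ^ m, 0) - config_poly (0, 1, 0)"
  unfolding fm_def config_poly_def by (simp add: dD_dgen)

lemma dD_mult_commute_mod:
  fixes h :: "'a::comm_ring_1 dpoly"
  assumes "e \<Longrightarrow> a = 0" "s \<Longrightarrow> b = 0" and h: "\<And>a b. dD a b h \<in> R"
    and J: "delta1 (dgen 1) \<in> diff_ideal R G" "delta2 (dgen 0) \<in> diff_ideal R G"
  shows "dD a b (dgen 0 ^ of_bool e * dgen 1 ^ of_bool s * h)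
    - dgen 0 ^ of_bool e * dgen 1 ^ of_bool s * dD a b h \<in> diff_ideal R G"
proof -
  have dD_0_left: "dD 0 b p = (delta2 ^^ b) p" and dD_0_right: "dD a 0 p = (delta1 ^^ a) p"
    for a b and p :: "'a dpoly"
    by (simp_all add: dD_def)
  show ?thesis
  proof (cases e; cases s)
    assume "e" "\<not> s"
    have "(delta2 ^^ k) h \<in> R" for k
      using h[of 0 k] by (simp add: dD_0_left)
    from diff_ideal_funpow_mult_commute[where d = delta2, OF _ J(2) this]
    show ?thesis using \<open>e\<close> \<open>\<not> s\<close> assms(1) by (simp add: dD_0_left)
  next
    assume "\<not> e" "s"
    have "(delta1 ^^ k) h \<in> R" for k
      using h[of k 0] by (simp add: dD_0_right)
    from diff_ideal_funpow_mult_commute[where d = delta1, OF _ J(1) this]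
    show ?thesis using \<open>\<not> e\<close> \<open>s\<close> assms(2) by (simp add: dD_0_right)
  qed (use assms in \<open>simp_all add: dD_def diff_ideal.zero\<close>)
qed

lemma x1_x2_dD_in_diff_ideal:
  fixes h :: "'a::comm_ring_1 dpoly"
  assumes "e \<Longrightarrow> a = 0" "s \<Longrightarrow> b = 0" and h: "\<And>a b. dD a b h \<in> ringA n"
    and J: "delta1 (dgen 1) \<in> diff_ideal (ringA n) G" "delta2 (dgen 0) \<in> diff_ideal (ringA n) G"
    and gen: "dgen 0 ^ of_bool e * dgen 1 ^ of_bool s * h \<in> diff_ideal (ringA n) G"
  shows "dgen 0 * dgen 1 * dD a b h \<in> diff_ideal (ringA n) G"
proof -
  define Z Z' :: "'a dpoly"
    where "Z = dgen 0 ^ of_bool e * dgen 1 ^ of_bool s"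
      and "Z' = dgen 0 ^ of_bool (\<not> e) * dgen 1 ^ of_bool (\<not> s)"
  have Z': "Z' \<in> ringA n"
    unfolding Z'_def by (intro ringA_mult ringA_power ringA_dgen) simp_all
  have "dgen 0 * dgen 1 * dD a b h = Z' * dD a b (Z * h) - Z' * (dD a b (Z * h) - Z * dD a b h)"
    unfolding Z_def Z'_def by (cases e; cases s) (simp_all add: algebra_simps)
  moreover have "Z' * dD a b (Z * h) \<in> diff_ideal (ringA n) G"
    using gen unfolding Z_def by (intro diff_ideal.mult[OF Z'] diff_ideal_dD)
  moreover have "Z' * (dD a b (Z * h) - Z * dD a b h) \<in> diff_ideal (ringA n) G"
    unfolding Z_def using assms by (intro diff_ideal.mult[OF Z'] dD_mult_commute_mod)
  ultimately show ?thesis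
    by (metis diff_ideal_diff ringA_uminus ringA_1)
qed

lemma fcmd_eq_mult:
  "fcmd i e s j \<alpha> \<beta> = dgen 0 ^ of_bool e * dgen 1 ^ of_bool s *
    (dX (i + 2, 1 - of_bool e, 1 - of_bool s)
      - dX (j + 2, nat (1 - of_bool e + \<alpha>), nat (1 - of_bool s + \<beta>)))"
  unfolding fcmd_def Let_def by (simp add: dD_dgen algebra_simps)

lemma config_poly_step:
  fixes P :: minsky_prog
  assumes prog: "minsky_program n P" and step: "((i, a, b), (j, a', b')) \<in> minsky_step P"
  shows "config_poly (i, a, b) - config_poly (j, a', b')
    \<in> (idealIJ n P :: 'a::comm_ring_1 dpoly set)"
proof -
  define e s where "e = (a = 0)" and "s = (b = 0)"
  from step obtain \<alpha> \<beta> where cmd: "P i e s = Some (j, \<alpha>, \<beta>)"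
    and a': "int a' = int a + \<alpha>" and b': "int b' = int b + \<beta>"
    unfolding minsky_step_def e_def s_def by blast
  from prog cmd have "i \<le> n" "j \<le> n" "\<alpha> \<in> {-1, 0, 1}" "\<beta> \<in> {-1, 0, 1}"
    and "e \<longrightarrow> \<alpha> \<ge> 0" "s \<longrightarrow> \<beta> \<ge> 0"
    unfolding minsky_program_def by blast+
  define h :: "'a dpoly" where "h = dX (i + 2, 1 - of_bool e, 1 - of_bool s)
      - dX (j + 2, nat (1 - of_bool e + \<alpha>), nat (1 - of_bool s + \<beta>))"
  have "(1 - of_bool e) + (a - 1) = a" "nat (1 - of_bool e + \<alpha>) + (a - 1) = a'"
    "(1 - of_bool s) + (b - 1) = b" "nat (1 - of_bool s + \<beta>) + (b - 1) = b'"
    using a' b' \<open>\<alpha> \<in> _\<close> \<open>\<beta> \<in> _\<close> \<open>e \<longrightarrow> _\<close> \<open>s \<longrightarrow> _\<close>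
    by (auto simp: e_def s_def)
  then have "dD (a - 1) (b - 1) h = dX (i + 2, a, b) - dX (j + 2, a', b')"
    unfolding h_def dD_diff dD_dX by simp
  moreover have "dgen 0 * dgen 1 * dD (a - 1) (b - 1) h \<in> idealIJ n P"
    unfolding idealIJ_def
  proof (rule x1_x2_dD_in_diff_ideal)
    show "dD x y h \<in> ringA n" for x y
      unfolding h_def dD_diff dD_dX using \<open>i \<le> n\<close> \<open>j \<le> n\<close>
      by (intro ringA_diff ringA_dX) simp_all
    have "dgen 0 ^ of_bool e * dgen 1 ^ of_bool s * h \<in> minsky_gens P"
      unfolding minsky_gens_def h_def fcmd_eq_mult[symmetric] using cmd by blast
    then show "dgen 0 ^ of_bool e * dgen 1 ^ of_bool s * h
        \<in> diff_ideal (ringA n) (minsky_gens P \<union> {delta1 (dgen 1), delta2 (dgen 0)})"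
      by (intro diff_ideal.gen) simp
  qed (auto simp: e_def s_def intro: diff_ideal.gen)
  ultimately show ?thesis
    by (simp add: config_poly_def right_diff_distrib)
qed

lemma config_poly_reaches:
  assumes "minsky_program n P" and "minsky_reaches P c c'"
  shows "config_poly c - config_poly c' \<in> (idealIJ n P :: 'a::comm_ring_1 dpoly set)"
  using assms(2) unfolding minsky_reaches_def
proof (induction rule: rtrancl_induct)
  case base
  then show ?case by (simp add: idealIJ_def diff_ideal.zero)
next
  case (step y z)
  have "config_poly y - config_poly z \<in> (idealIJ n P :: 'a dpoly set)"
    using config_poly_step[OF assms(1)] step.hyps(2) by (cases y; cases z) simp
  from diff_ideal.add[OF step.IH[unfolded idealIJ_def] this[unfolded idealIJ_def]]
  show ?case by (simp add: idealIJ_def)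
qed

section \<open>A linear functional vanishing on \<open>I + J\<close>\<close>

lemma lin_ext_diff_ideal:
  assumes "\<And>p. lin_ext w (delta1 p) = 0" "\<And>p. lin_ext w (delta2 p) = 0"
    and "\<And>g r. g \<in> G \<Longrightarrow> lin_ext w (r * g) = 0"
    and "x \<in> diff_ideal R G"
  shows "lin_ext w (r * x) = 0"
  using assms(4)
proof (induction arbitrary: r)
  case (gen g)
  then show ?case using assms(3) by blast
next
  case zero
  then show ?case by simp
next
  case (add x y)
  then show ?case by (simp add: distrib_left lin_ext_add)
next
  case (mult s x)
  then show ?case by (metis mult.assoc)
next
  case (d1 x)
  have "r * delta1 x = delta1 (r * x) - delta1 r * x"
    by (simp add: delta1_def dder_mult)
  then show ?case using d1.IH assms(1) by (simp add: lin_ext_diff)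
next
  case (d2 x)
  have "r * delta2 x = delta2 (r * x) - delta2 r * x"
    by (simp add: delta2_def dder_mult)
  then show ?case using d2.IH assms(2) by (simp add: lin_ext_diff)
qed

definition xq_mon :: "nat \<times> nat \<times> nat \<times> nat \<times> nat \<Rightarrow> (dvar \<Rightarrow>\<^sub>0 nat)" where
  "xq_mon = (\<lambda>(c, d, k, a, b). mvar (0, c, 0) + mvar (1, 0, d) + mvar (k + 2, a, b))"

lemma lookup_xq_mon:
  "Poly_Mapping.lookup (xq_mon (c, d, k, a, b)) u =
    of_bool (u = (0, c, 0)) + of_bool (u = (1, 0, d)) + of_bool (u = (k + 2, a, b))"
  unfolding xq_mon_def by (simp add: lookup_add lookup_single when_def)

lemma keys_xq_mon:
  "Poly_Mapping.keys (xq_mon (c, d, k, a, b)) = {(0, c, 0), (1, 0, d), (k + 2, a, b)}"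
  by (auto simp: in_keys_iff lookup_xq_mon)

lemma inj_xq_mon: "inj xq_mon"
proof (rule injI)
  fix t t' assume eq: "xq_mon t = xq_mon t'"
  obtain c d k a b where t: "t = (c, d, k, a, b)" by (cases t) auto
  obtain c' d' k' a' b' where t': "t' = (c', d', k', a', b')" by (cases t') auto
  have "u \<in> Poly_Mapping.keys (xq_mon t')" if "u \<in> Poly_Mapping.keys (xq_mon t)" for u
    using that eq by simp
  then show "t = t'"
    unfolding t t' keys_xq_mon by auto
qed

text \<open>The weight integrates by parts, moving the derivatives of \<open>x\<^sub>1\<close> and \<open>x\<^sub>2\<close> onto
  \<open>q\<^sub>k\<close>; monomials containing \<open>\<delta>\<^sub>2(x\<^sub>1)\<close> or \<open>\<delta>\<^sub>1(x\<^sub>2)\<close> get weight zero,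
  which is what kills \<open>J\<close>.\<close>
definition config_weight :: "(nat \<times> nat \<times> nat \<Rightarrow> 'a) \<Rightarrow> (dvar \<Rightarrow>\<^sub>0 nat) \<Rightarrow> 'a::comm_ring_1" where
  "config_weight \<psi> m = (if m \<in> range xq_mon
     then (case inv xq_mon m of (c, d, k, a, b) \<Rightarrow> (- 1) ^ (c + d) * \<psi> (k, a + c, b + d))
     else 0)"

lemma config_weight_xq_mon:
  "config_weight \<psi> (xq_mon (c, d, k, a, b)) = (- 1) ^ (c + d) * \<psi> (k, a + c, b + d)"
  by (simp add: config_weight_def inv_f_f[OF inj_xq_mon])

lemma config_weight_eq_0: "m \<notin> range xq_mon \<Longrightarrow> config_weight \<psi> m = 0"
  by (simp add: config_weight_def)

lemma mvar_in_keys_xq_mon: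
  "m + mvar u = xq_mon (c, d, k, a, b) \<Longrightarrow> u \<in> {(0, c, 0), (1, 0, d), (k + 2, a, b)}"
proof -
  assume eq: "m + mvar u = xq_mon (c, d, k, a, b)"
  have "u \<in> Poly_Mapping.keys (m + mvar u)"
    by (simp add: in_keys_iff lookup_add)
  then show ?thesis unfolding eq keys_xq_mon .
qed

lemma config_weight_add_delta1_x2: "config_weight \<psi> (m + mvar (1, Suc x, y)) = 0"
  by (rule config_weight_eq_0) (use mvar_in_keys_xq_mon[of m "(1, Suc x, y)"] in force)

lemma config_weight_add_delta2_x1: "config_weight \<psi> (m + mvar (0, x, Suc y)) = 0"
  by (rule config_weight_eq_0) (use mvar_in_keys_xq_mon[of m "(0, x, Suc y)"] in force)

lemma xq_mon_replace:
  "xq_mon (c, d, k, a, b) - mvar (0, c, 0) + mvar (0, c', 0) = xq_mon (c', d, k, a, b)"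
  "xq_mon (c, d, k, a, b) - mvar (1, 0, d) + mvar (1, 0, d') = xq_mon (c, d', k, a, b)"
  "xq_mon (c, d, k, a, b) - mvar (k + 2, a, b) + mvar (k + 2, a', b') = xq_mon (c, d, k, a', b')"
  unfolding xq_mon_def
  by (auto intro!: poly_mapping_eqI simp: lookup_add lookup_minus lookup_single when_def)

lemma exchange_mvar_inverse:
  assumes "v \<in> Poly_Mapping.keys m" "m - mvar v + mvar u = m'"
  shows "m = m' - mvar u + mvar v"
  using assms
  by (auto intro!: poly_mapping_eqI
      simp: in_keys_iff lookup_add lookup_minus lookup_single when_def)

lemma xq_mon_range_shift1:
  assumes "(l, x, y) \<in> Poly_Mapping.keys m" "m - mvar (l, x, y) + mvar (l, Suc x, y) \<in> range xq_mon"
  shows "m \<in> range xq_mon"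
proof -
  from assms(2) obtain c d k a b
    where eq: "m - mvar (l, x, y) + mvar (l, Suc x, y) = xq_mon (c, d, k, a, b)"
    by (auto simp: image_iff)
  have m: "m = xq_mon (c, d, k, a, b) - mvar (l, Suc x, y) + mvar (l, x, y)"
    by (rule exchange_mvar_inverse[OF assms(1) eq])
  from mvar_in_keys_xq_mon[OF eq]
  consider "(l, Suc x, y) = (0, c, 0)" | "(l, Suc x, y) = (k + 2, a, b)"
    by auto
  then show ?thesis
  proof cases
    case 1
    then have "m = xq_mon (x, d, k, a, b)" using m xq_mon_replace(1) by simp
    then show ?thesis by simp
  next
    case 2
    then have "m = xq_mon (c, d, k, x, b)" using m xq_mon_replace(3) by simp
    then show ?thesis by simp
  qed
qed

lemma xq_mon_range_shift2:
  assumes "(l, x, y) \<in> Poly_Mapping.keys m" "m - mvar (l, x, y) + mvar (l, x, Suc y) \<in> range xq_mon"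
  shows "m \<in> range xq_mon"
proof -
  from assms(2) obtain c d k a b
    where eq: "m - mvar (l, x, y) + mvar (l, x, Suc y) = xq_mon (c, d, k, a, b)"
    by (auto simp: image_iff)
  have m: "m = xq_mon (c, d, k, a, b) - mvar (l, x, Suc y) + mvar (l, x, y)"
    by (rule exchange_mvar_inverse[OF assms(1) eq])
  from mvar_in_keys_xq_mon[OF eq]
  consider "(l, x, Suc y) = (1, 0, d)" | "(l, x, Suc y) = (k + 2, a, b)"
    by auto
  then show ?thesis
  proof cases
    case 1
    then have "m = xq_mon (c, y, k, a, b)" using m xq_mon_replace(2) by simp
    then show ?thesis by simp
  next
    case 2
    then have "m = xq_mon (c, d, k, a, y)" using m xq_mon_replace(3) by simp
    then show ?thesis by simp
  qed
qed

lemma lin_ext_config_weight_delta1: "lin_ext (config_weight \<psi>) (delta1 p) = 0"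
proof -
  have "(\<Sum>v\<in>Poly_Mapping.keys m. of_nat (Poly_Mapping.lookup m v) *
      config_weight \<psi> (m - mvar v + mvar (case v of (l, x, y) \<Rightarrow> (l, Suc x, y)))) = 0" for m
  proof (cases "m \<in> range xq_mon")
    case True
    then obtain c d k a b where m: "m = xq_mon (c, d, k, a, b)" by auto
    have "config_weight \<psi> (m - mvar (0, c, 0) + mvar (0, Suc c, 0))
        = (- 1) ^ (Suc c + d) * \<psi> (k, a + Suc c, b + d)"
      unfolding m xq_mon_replace config_weight_xq_mon ..
    moreover have "config_weight \<psi> (m - mvar (k + 2, a, b) + mvar (k + 2, Suc a, b))
        = (- 1) ^ (c + d) * \<psi> (k, Suc a + c, b + d)"
      unfolding m xq_mon_replace config_weight_xq_mon ..
    moreover have "config_weight \<psi> (m - mvar (1, 0, d) + mvar (1, Suc 0, d)) = 0"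
      by (rule config_weight_add_delta1_x2)
    ultimately show ?thesis
      by (simp add: m keys_xq_mon lookup_xq_mon)
  next
    case False
    show ?thesis
    proof (rule sum.neutral, rule ballI)
      fix v assume "v \<in> Poly_Mapping.keys m"
      show "of_nat (Poly_Mapping.lookup m v) *
          config_weight \<psi> (m - mvar v + mvar (case v of (l, x, y) \<Rightarrow> (l, Suc x, y))) = 0"
      proof -
        obtain l x y where v: "v = (l, x, y)" by (cases v)
        have "config_weight \<psi> (m - mvar (l, x, y) + mvar (l, Suc x, y)) = 0"
          using xq_mon_range_shift1 \<open>v \<in> _\<close> False unfolding v
          by (intro config_weight_eq_0) blast
        then show ?thesis by (simp add: v)
      qed
    qed
  qed
  then show ?thesis
    unfolding delta1_def lin_ext_dder by simp
qed

lemma lin_ext_config_weight_delta2: "lin_ext (config_weight \<psi>) (delta2 p) = 0"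
proof -
  have "(\<Sum>v\<in>Poly_Mapping.keys m. of_nat (Poly_Mapping.lookup m v) *
      config_weight \<psi> (m - mvar v + mvar (case v of (l, x, y) \<Rightarrow> (l, x, Suc y)))) = 0" for m
  proof (cases "m \<in> range xq_mon")
    case True
    then obtain c d k a b where m: "m = xq_mon (c, d, k, a, b)" by auto
    have "config_weight \<psi> (m - mvar (1, 0, d) + mvar (1, 0, Suc d))
        = (- 1) ^ (c + Suc d) * \<psi> (k, a + c, b + Suc d)"
      unfolding m xq_mon_replace config_weight_xq_mon ..
    moreover have "config_weight \<psi> (m - mvar (k + 2, a, b) + mvar (k + 2, a, Suc b))
        = (- 1) ^ (c + d) * \<psi> (k, a + c, Suc b + d)"
      unfolding m xq_mon_replace config_weight_xq_mon ..
    moreover have "config_weight \<psi> (m - mvar (0, c, 0) + mvar (0, c, Suc 0)) = 0"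
      by (rule config_weight_add_delta2_x1)
    ultimately show ?thesis
      by (simp add: m keys_xq_mon lookup_xq_mon)
  next
    case False
    show ?thesis
    proof (rule sum.neutral, rule ballI)
      fix v assume "v \<in> Poly_Mapping.keys m"
      show "of_nat (Poly_Mapping.lookup m v) *
          config_weight \<psi> (m - mvar v + mvar (case v of (l, x, y) \<Rightarrow> (l, x, Suc y))) = 0"
      proof -
        obtain l x y where v: "v = (l, x, y)" by (cases v)
        have "config_weight \<psi> (m - mvar (l, x, y) + mvar (l, x, Suc y)) = 0"
          using xq_mon_range_shift2 \<open>v \<in> _\<close> False unfolding v
          by (intro config_weight_eq_0) blast
        then show ?thesis by (simp add: v)
      qed
    qed
  qed
  then show ?thesis
    unfolding delta2_def lin_ext_dder by simp
qed

lemma lin_ext_config_weight_J_gens: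
  "lin_ext (config_weight \<psi>) (r * delta1 (dgen 1)) = 0"
  "lin_ext (config_weight \<psi>) (r * delta2 (dgen 0)) = 0"
proof -
  have "delta1 (dgen 1) = (Poly_Mapping.single (mvar (1, Suc 0, 0)) 1 :: 'a dpoly)"
    "delta2 (dgen 0) = (Poly_Mapping.single (mvar (0, 0, Suc 0)) 1 :: 'a dpoly)"
    unfolding dgen_def delta1_def delta2_def dder_dX by (simp_all add: dX_def)
  then show "lin_ext (config_weight \<psi>) (r * delta1 (dgen 1)) = 0"
    "lin_ext (config_weight \<psi>) (r * delta2 (dgen 0)) = 0"
    by (simp_all only: lin_ext_mult_single config_weight_add_delta1_x2
        config_weight_add_delta2_x1 lin_ext_zero_fun mult_zero_right)
qed

lemma add_mvar_q_in_range_xq_mon_iff: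
  "m + mvar (k + 2, p, q) \<in> range xq_mon \<longleftrightarrow> (\<exists>c d. m = mvar (0, c, 0) + mvar (1, 0, d))"
proof
  assume "m + mvar (k + 2, p, q) \<in> range xq_mon"
  then obtain c d k' a b where eq: "m + mvar (k + 2, p, q) = xq_mon (c, d, k', a, b)"
    by (auto simp: image_iff)
  then have "k = k'" "p = a" "q = b"
    using mvar_in_keys_xq_mon[OF eq] by auto
  then have "m + mvar (k + 2, p, q) = (mvar (0, c, 0) + mvar (1, 0, d)) + mvar (k + 2, p, q)"
    using eq by (simp add: xq_mon_def)
  then show "\<exists>c d. m = mvar (0, c, 0) + mvar (1, 0, d)" by auto
next
  assume "\<exists>c d. m = mvar (0, c, 0) + mvar (1, 0, d)"
  then obtain c d where "m = mvar (0, c, 0) + mvar (1, 0, d)" by blast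
  then have "m + mvar (k + 2, p, q) = xq_mon (c, d, k, p, q)" by (simp add: xq_mon_def)
  then show "m + mvar (k + 2, p, q) \<in> range xq_mon" by (metis rangeI)
qed

lemma config_weight_exchange_q:
  assumes "\<And>c d. m = mvar (0, c, 0) + mvar (1, 0, d) \<Longrightarrow> \<psi> (i, p + c, q + d) = \<psi> (j, p' + c, q' + d)"
  shows "config_weight \<psi> (m + mvar (i + 2, p, q)) = config_weight \<psi> (m + mvar (j + 2, p', q'))"
proof (cases "\<exists>c d. m = mvar (0, c, 0) + mvar (1, 0, d)")
  case True
  then obtain c d where m: "m = mvar (0, c, 0) + mvar (1, 0, d)" by blast
  have "m + mvar (i + 2, p, q) = xq_mon (c, d, i, p, q)"
    "m + mvar (j + 2, p', q') = xq_mon (c, d, j, p', q')"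
    by (simp_all add: m xq_mon_def)
  then show ?thesis using assms[OF m] by (simp add: config_weight_xq_mon add.commute)
next
  case False
  then have "m + mvar (i + 2, p, q) \<notin> range xq_mon" "m + mvar (j + 2, p', q') \<notin> range xq_mon"
    using add_mvar_q_in_range_xq_mon_iff by blast+
  then show ?thesis by (metis config_weight_eq_0)
qed

lemma lin_ext_config_weight_fcmd:
  assumes prog: "minsky_program n P" and cmd: "P i e s = Some (j, \<alpha>, \<beta>)"
    and inv: "\<And>c c'. (c, c') \<in> minsky_step P \<Longrightarrow> \<psi> c = \<psi> c'"
  shows "lin_ext (config_weight \<psi>) (r * fcmd i e s j \<alpha> \<beta>) = 0"
proof -
  from prog cmd have "\<alpha> \<in> {-1, 0, 1}" "\<beta> \<in> {-1, 0, 1}" "e \<longrightarrow> \<alpha> \<ge> 0" "s \<longrightarrow> \<beta> \<ge> 0"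
    unfolding minsky_program_def by blast+
  define Z where "Z = (if e then mvar (0, 0, 0) else 0) + (if s then mvar (1, 0, 0) else 0)"
  define p q :: nat where "p = 1 - of_bool e" and "q = 1 - of_bool s"
  define p' q' where "p' = nat (int p + \<alpha>)" and "q' = nat (int q + \<beta>)"
  have fcmd: "fcmd i e s j \<alpha> \<beta> = Poly_Mapping.single (Z + mvar (i + 2, p, q)) 1
      - Poly_Mapping.single (Z + mvar (j + 2, p', q')) 1"
    unfolding fcmd_def Let_def dD_dgen Z_def p_def q_def p'_def q'_def
    by (cases e; cases s) (simp_all add: dgen_def dX_def mult_single)
  have "config_weight \<psi> (m + Z + mvar (i + 2, p, q))
      = config_weight \<psi> (m + Z + mvar (j + 2, p', q'))" for m
  proof (rule config_weight_exchange_q)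
    fix c d assume mZ: "m + Z = mvar (0, c, 0) + mvar (1, 0, d)"
    have "e \<Longrightarrow> c = 0"
      using arg_cong[OF mZ, of "\<lambda>m. Poly_Mapping.lookup m (0, 0, 0)"]
      by (auto simp: Z_def lookup_add lookup_single when_def split: if_splits)
    moreover have "s \<Longrightarrow> d = 0"
      using arg_cong[OF mZ, of "\<lambda>m. Poly_Mapping.lookup m (1, 0, 0)"]
      by (auto simp: Z_def lookup_add lookup_single when_def split: if_splits)
    ultimately have "((i, p + c, q + d), (j, p' + c, q' + d)) \<in> minsky_step P"
      using cmd \<open>\<alpha> \<in> _\<close> \<open>\<beta> \<in> _\<close> \<open>e \<longrightarrow> _\<close> \<open>s \<longrightarrow> _\<close>
      by (cases e; cases s) (auto simp: minsky_step_def p_def q_def p'_def q'_def)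
    then show "\<psi> (i, p + c, q + d) = \<psi> (j, p' + c, q' + d)" by (rule inv)
  qed
  then show ?thesis
    by (simp add: fcmd right_diff_distrib lin_ext_diff lin_ext_mult_single add.assoc)
qed

lemma lin_ext_config_weight_I_plus_J:
  assumes prog: "minsky_program n P"
    and inv: "\<And>c c'. (c, c') \<in> minsky_step P \<Longrightarrow> \<psi> c = \<psi> c'"
    and x: "x \<in> idealI n P + idealJ n"
  shows "lin_ext (config_weight \<psi>) x = 0"
proof -
  from x obtain u v where "x = u + v" "u \<in> idealI n P" "v \<in> idealJ n"
    by (auto elim: set_plus_elim)
  moreover have "lin_ext (config_weight \<psi>) (1 * u) = 0" if "u \<in> idealI n P" for u
    using that unfolding idealI_def
    by (rule lin_ext_diff_ideal[OF lin_ext_config_weight_delta1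
          lin_ext_config_weight_delta2, rotated])
       (auto intro: lin_ext_config_weight_fcmd[OF prog _ inv])
  moreover have "lin_ext (config_weight \<psi>) (1 * v) = 0" if "v \<in> idealJ n" for v
    using that unfolding idealJ_def
    by (rule lin_ext_diff_ideal[OF lin_ext_config_weight_delta1
          lin_ext_config_weight_delta2, rotated])
       (metis empty_iff insertE lin_ext_config_weight_J_gens)
  ultimately show ?thesis by (simp add: lin_ext_add)
qed

lemma lin_ext_config_weight_config_poly: "lin_ext (config_weight \<psi>) (config_poly c) = \<psi> c"
proof -
  obtain i a b where c: "c = (i, a, b)" by (cases c)
  have "config_poly c = (Poly_Mapping.single (xq_mon (0, 0, i, a, b)) 1 :: 'a dpoly)"
    by (simp add: c config_poly_def dgen_def dX_def mult_single xq_mon_def)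
  then have "lin_ext (config_weight \<psi>) (config_poly c) = config_weight \<psi> (xq_mon (0, 0, i, a, b))"
    by simp
  then show ?thesis by (simp add: c config_weight_xq_mon)
qed

section \<open>Deterministic machines\<close>

lemma single_valued_minsky_step: "single_valued (minsky_step P)"
  by (rule single_valuedI) (auto simp: minsky_step_def)

lemma minsky_halt_state_terminal: "minsky_program n P \<Longrightarrow> (0, a, b) \<notin> Domain (minsky_step P)"
  unfolding minsky_step_def minsky_program_def by force

lemma single_valued_rtrancl_terminal_step:
  assumes "single_valued R" "t \<notin> Domain R" "(c, t) \<in> R\<^sup>*" "(c, c') \<in> R"
  shows "(c', t) \<in> R\<^sup>*"
proof -
  have "(c', t) \<in> R\<^sup>* \<or> (t, c') \<in> R\<^sup>*"
    using single_valued_confluent[OF assms(1) r_into_rtrancl[OF assms(4)] assms(3)] .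
  then show ?thesis
    using assms(2) by (auto elim: converse_rtranclE)
qed

lemma single_valued_rtrancl_terminal_no_run:
  assumes "single_valued R" "t \<notin> Domain R" "(r 0, t) \<in> R\<^sup>*"
    and run: "\<And>k. (r k, r (Suc k)) \<in> R"
  shows False
proof -
  from assms(3) obtain k where "(r 0, t) \<in> R ^^ k"
    by (auto simp: rtrancl_power)
  moreover have "(r 0, r k) \<in> R ^^ k" for k
    by (induction k) (auto intro: relpow_Suc_I run)
  ultimately have "r k = t"
    using single_valued_relpow[OF assms(1)] by (auto dest: single_valuedD)
  then show False using run[of k] assms(2) by auto
qed

lemma minsky_reaches_halt_step_iff:
  assumes "minsky_program n P" "(c, c') \<in> minsky_step P"
  shows "minsky_reaches P c (0, a, b) \<longleftrightarrow> minsky_reaches P c' (0, a, b)"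
  unfolding minsky_reaches_def
  using single_valued_rtrancl_terminal_step[OF single_valued_minsky_step
      minsky_halt_state_terminal[OF assms(1)] _ assms(2)]
    converse_rtrancl_into_rtrancl[OF assms(2)]
  by blast

lemma minsky_runs_forever_not_reaches_halt:
  assumes "minsky_program n P" "minsky_runs_forever P c"
  shows "\<not> minsky_reaches P c (0, a, b)"
  using assms(2) single_valued_rtrancl_terminal_no_run[OF single_valued_minsky_step
      minsky_halt_state_terminal[OF assms(1)]]
  unfolding minsky_runs_forever_def minsky_reaches_def by metis

theorem proposition1:
  fixes n :: nat and P :: minsky_prog and S :: "nat set" and m :: nat
  assumes prog: "minsky_program n P"
    and acyc: "acyclic (minsky_step P)"
    and halts: "\<And>x. x \<in> S \<Longrightarrow> minsky_reaches P (1, 2 ^ 2 ^ x, 0) (0, 1, 0)"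
    and loops: "\<And>x. x \<notin> S \<Longrightarrow> minsky_runs_forever P (1, 2 ^ 2 ^ x, 0)"
  shows "(fm m :: 'a::comm_ring_1 dpoly) \<in> {a + b | a b. a \<in> idealI n P \<and> b \<in> idealJ n}
         \<longleftrightarrow> m \<in> S"
proof -
  have "{a + b | a b. a \<in> idealI n P \<and> b \<in> idealJ n} = (idealI n P + idealJ n :: 'a dpoly set)"
    by (auto simp: set_plus_def)
  moreover have "fm m \<in> (idealI n P + idealJ n :: 'a dpoly set)" if "m \<in> S"
    using config_poly_reaches[OF prog halts[OF that]] idealIJ_subset
    unfolding fm_eq_config_poly by blast
  moreover have "m \<in> S" if fm: "fm m \<in> (idealI n P + idealJ n :: 'a dpoly set)"
  proof (rule ccontr)
    assume "m \<notin> S"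
    define \<psi> :: "nat \<times> nat \<times> nat \<Rightarrow> 'a"
      where "\<psi> c = of_bool (minsky_reaches P c (0, 1, 0))" for c
    have "\<psi> c = \<psi> c'" if "(c, c') \<in> minsky_step P" for c c'
      using minsky_reaches_halt_step_iff[OF prog that] by (simp add: \<psi>_def)
    then have "\<psi> (1, 2 ^ 2 ^ m, 0) - \<psi> (0, 1, 0) = 0"
      using lin_ext_config_weight_I_plus_J[OF prog _ fm]
      by (simp add: fm_eq_config_poly lin_ext_diff lin_ext_config_weight_config_poly)
    then have "minsky_reaches P (1, 2 ^ 2 ^ m, 0) (0, 1, 0)"
      by (simp add: \<psi>_def minsky_reaches_def)
    with minsky_runs_forever_not_reaches_halt[OF prog loops[OF \<open>m \<notin> S\<close>]] show False
      by blast
  qed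
  ultimately show ?thesis by blast
qed

end
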